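(* Consider the system $x_{k+1}=Ax_k+Bu_k$ with constraint sets $\mathcal{X}=\{x\mid C_xx\le c_x\}$, $\mathcal{U}=\{u\mid C_uu\le c_u\}$ (with $0\in\operatorname{int}\mathcal{X}$, $0\in\operatorname{int}\mathcal{U}$) and equilibrium at the origin, controlled by a ReLU network $u_k=\mathcal{N}(x_k;\theta)$ with $L$ hidden layers, i.e. $x_{k+1}=f_{\text{cl}}(x_k)=Ax_k+B\mathcal{N}(x_k;\theta)$. Let $\Gamma_{\text{eq}}=G(0)$, $\mathcal{R}_{\text{eq}}=\{x\mid G(x)=\Gamma_{\text{eq}}\}$, and suppose $W_{L+1}b_{\Gamma_{\text{eq}},L}+b_{L+1}=0$ and all eigenvalues of $A+BW_{L+1}W_{\Gamma_{\text{eq}},L}$ have modulus strictly less than $1$. Let $\mathcal{R}_K$ be the set of initial states from which the linear feedback $u_k=W_{L+1}W_{\Gamma_{\text{eq}},L}x_k$ yields a trajectory with $x_k\in\mathcal{X}$, $u_k\in\mathcal{U}$ for all $k\ge0$ converging to the origin, and let $\mathcal{R}_{\text{as}}$ be an admissible control-invariant set for the closed loop with $\mathcal{R}_{\text{as}}\subseteq\mathcal{R}_{\text{eq}}\cap\mathcal{R}_K$. Let $\mathcal{X}_{\text{in}}=\{x\mid C_{\text{in}}x\le c_{\text{in}}\}$ be a polytope, $k\ge1$, $C_{\text{out}}\in\mathbb{R}^{n_{\text{out}}\times n_x}$, and define $c_{\text{out}}^{*(i)}=\max_{x_0\in\mathcal{X}_{\text{in}}}C_{\text{out}}^{(i)}f_{\text{cl}}^{k}(x_0)$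 (where $f_{\text{cl}}^k$ is the $k$-fold composition of $f_{\text{cl}}$) and $\mathcal{X}^*_{k,\text{out}}=\{x\mid C_{\text{out}}x\le c_{\text{out}}^*\}$. If $\mathcal{X}^*_{k,\text{out}}\subseteq\mathcal{R}_{\text{as}}$, then the closed-loop system is asymptotically stable for all $x\in\mathcal{X}_{\text{in}}$, i.e. every closed-loop trajectory starting in $\mathcal{X}_{\text{in}}$ converges asymptotically to the origin.
   Context: A ReLU network is $\mathcal{N}(x;\theta)=W_{L+1}\xi_L+b_{L+1}$ with $\xi_0=x$, $\xi_l=\max(0,W_l\xi_{l-1}+b_l)$ elementwise for $l=1,\dots,L$, where $W_l\in\mathbb{R}^{n_l\times n_{l-1}}$ ($n_0=n_x$), $b_l\in\mathbb{R}^{n_l}$, $W_{L+1}\in\mathbb{R}^{n_u\times n_L}$, $b_{L+1}\in\mathbb{R}^{n_u}$. The activation pattern is $G(x)=(\gamma_1(x),\dots,\gamma_L(x))$, $\gamma_l(x)^{(i)}=1$ iff $W_l^{(i)}\xi_{l-1}+b_l^{(i)}\ge0$, else $0$. For a fixed pattern $\Gamma=(\gamma_1,\dots,\gamma_L)$ set $\eta_0=x$, $\eta_l=\gamma_l\odot(W_l\eta_{l-1}+b_l)$; then $\eta_L=W_{\Gamma,L}x+b_{\Gamma,L}$ defines $W_{\Gamma,L}\in\mathbb{R}^{n_L\times n_x}$, $b_{\Gamma,L}\in\mathbb{R}^{n_L}$. A set $\mathcal{C}$ is an admissible control-invariant set for the closed loop if $\mathcal{N}(x;\theta)\in\mathcal{U}$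 for all $x\in\mathcal{C}$ and $f_{\text{cl}}(\mathcal{C})\subseteq\mathcal{C}$. $M^{(i)}$ is the $i$-th row of $M$, $v^{(i)}$ the $i$-th entry of $v$. *)

theory Defs
  imports "Jordan_Normal_Form.Char_Poly"
begin

definition vle :: "real vec \<Rightarrow> real vec \<Rightarrow> bool" where
  "vle x y \<longleftrightarrow> dim_vec x = dim_vec y \<and> (\<forall>i<dim_vec y. x $ i \<le> y $ i)"

definition polyh :: "nat \<Rightarrow> real mat \<Rightarrow> real vec \<Rightarrow> real vec set" where
  "polyh n C c = {x. dim_vec x = n \<and> vle (C *\<^sub>v x) c}"

definition zero_interior :: "nat \<Rightarrow> real vec set \<Rightarrow> bool" where
  "zero_interior n S \<longleftrightarrow> (\<exists>e>0. \<forall>x. dim_vec x = n \<and> (\<forall>i<n. \<bar>x $ i\<bar> < e) \<longrightarrow> x \<in> S)"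

definition bounded_vecs :: "real vec set \<Rightarrow> bool" where
  "bounded_vecs S \<longleftrightarrow> (\<exists>M. \<forall>x\<in>S. \<forall>i<dim_vec x. \<bar>x $ i\<bar> \<le> M)"

definition relu :: "real vec \<Rightarrow> real vec" where
  "relu v = vec (dim_vec v) (\<lambda>i. max 0 (v $ i))"

fun hidden :: "(real mat \<times> real vec) list \<Rightarrow> real vec \<Rightarrow> real vec" where
  "hidden [] x = x"
| "hidden ((W, b) # ls) x = hidden ls (relu (W *\<^sub>v x + b))"

definition net :: "(real mat \<times> real vec) list \<Rightarrow> real mat \<Rightarrow> real vec \<Rightarrow> real vec \<Rightarrow> real vec" where
  "net ls Wo bo x = Wo *\<^sub>v hidden ls x + bo"

fun wf_layers :: "nat \<Rightarrow> (real mat \<times> real vec) list \<Rightarrow> bool" where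
  "wf_layers n [] = True"
| "wf_layers n ((W, b) # ls) = (W \<in> carrier_mat (dim_row W) n \<and> dim_vec b = dim_row W \<and> wf_layers (dim_row W) ls)"

fun out_dim :: "nat \<Rightarrow> (real mat \<times> real vec) list \<Rightarrow> nat" where
  "out_dim n [] = n"
| "out_dim n ((W, b) # ls) = out_dim (dim_row W) ls"

definition wf_net :: "nat \<Rightarrow> nat \<Rightarrow> (real mat \<times> real vec) list \<Rightarrow> real mat \<Rightarrow> real vec \<Rightarrow> bool" where
  "wf_net nx nu ls Wo bo \<longleftrightarrow> wf_layers nx ls \<and> Wo \<in> carrier_mat nu (out_dim nx ls) \<and> dim_vec bo = nu"

fun pattern :: "(real mat \<times> real vec) list \<Rightarrow> real vec \<Rightarrow> real vec list" where
  "pattern [] x = []"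
| "pattern ((W, b) # ls) x =
     (let z = W *\<^sub>v x + b in
      vec (dim_vec z) (\<lambda>i. if z $ i \<ge> 0 then 1 else 0) # pattern ls (relu z))"

(* For a fixed pattern: eta_l = gamma_l .* (W_l eta_{l-1} + b_l), with eta_l = M x + c.
   affine_pat ls gs (M, c) propagates the affine representation (M, c) of eta_{l-1}. *)
fun affine_pat :: "(real mat \<times> real vec) list \<Rightarrow> real vec list \<Rightarrow> real mat \<times> real vec \<Rightarrow> real mat \<times> real vec" where
  "affine_pat ((W, b) # ls) (g # gs) (M, c) =
     (let D = mat (dim_vec g) (dim_vec g) (\<lambda>(i, j). if i = j then g $ i else 0) in
      affine_pat ls gs (D * (W * M), D *\<^sub>v (W *\<^sub>v c + b)))"
| "affine_pat _ _ Mc = Mc"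

definition W_pat :: "nat \<Rightarrow> (real mat \<times> real vec) list \<Rightarrow> real vec list \<Rightarrow> real mat" where
  "W_pat nx ls gs = fst (affine_pat ls gs (1\<^sub>m nx, 0\<^sub>v nx))"

definition b_pat :: "nat \<Rightarrow> (real mat \<times> real vec) list \<Rightarrow> real vec list \<Rightarrow> real vec" where
  "b_pat nx ls gs = snd (affine_pat ls gs (1\<^sub>m nx, 0\<^sub>v nx))"

definition conv_zero :: "nat \<Rightarrow> (nat \<Rightarrow> real vec) \<Rightarrow> bool" where
  "conv_zero n xs \<longleftrightarrow> (\<forall>i<n. (\<lambda>k. xs k $ i) \<longlonglongrightarrow> 0)"

end

theory Submission
  imports Defs
begin

text \<open>
  On the activation region of the origin, \<open>R\<^sub>e\<^sub>q\<close>, the network is the affine map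
  \<open>x \<mapsto> W\<^sub>L\<^sub>+\<^sub>1 (W\<^sub>\<Gamma>\<^sub>,\<^sub>L x + b\<^sub>\<Gamma>\<^sub>,\<^sub>L) + b\<^sub>L\<^sub>+\<^sub>1\<close>, which by the bias condition is the
  linear feedback \<open>K x\<close>. Hence on the invariant set \<open>R\<^sub>a\<^sub>s \<subseteq> R\<^sub>e\<^sub>q\<close> the closed loop
  coincides with \<open>x \<mapsto> (A + B K) x\<close>, and since \<open>R\<^sub>a\<^sub>s \<subseteq> R\<^sub>K\<close>, every trajectory
  entering \<open>R\<^sub>a\<^sub>s\<close> converges to the origin. By the choice of \<open>c\<^sup>*\<^sub>o\<^sub>u\<^sub>t\<close>, the
  \<open>k\<close>-step image of \<open>X\<^sub>i\<^sub>n\<close> lies in \<open>X\<^sup>*\<^sub>k\<^sub>,\<^sub>o\<^sub>u\<^sub>t \<subseteq> R\<^sub>a\<^sub>s\<close>.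
  Convergence is part of the definition of \<open>R\<^sub>K\<close>.
\<close>

definition gate :: "real vec \<Rightarrow> real vec" where
  "gate z = vec (dim_vec z) (\<lambda>i. if z $ i \<ge> 0 then 1 else 0)"

lemma dim_gate [simp]: "dim_vec (gate z) = dim_vec z"
  by (simp add: gate_def)

lemma pattern_Cons:
  "pattern ((W, b) # ls) x = gate (W *\<^sub>v x + b) # pattern ls (relu (W *\<^sub>v x + b))"
  by (simp add: gate_def Let_def)

lemma affine_pat_Cons:
  "affine_pat ((W, b) # ls) (g # gs) (M, c) =
     affine_pat ls gs (mat_diag (dim_vec g) (($) g) * (W * M), mat_diag (dim_vec g) (($) g) *\<^sub>v (W *\<^sub>v c + b))"
proof -
  have "mat (dim_vec g) (dim_vec g) (\<lambda>(i, j). if i = j then g $ i else 0) = mat_diag (dim_vec g) (($) g)"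
    by (rule eq_matI) (auto simp: mat_diag_def)
  then show ?thesis by (simp add: Let_def)
qed

lemma relu_eq_mat_diag_gate: "relu z = mat_diag (dim_vec z) (($) (gate z)) *\<^sub>v z"
proof (rule eq_vecI)
  fix i assume "i < dim_vec (mat_diag (dim_vec z) (($) (gate z)) *\<^sub>v z)"
  then have i: "i < dim_vec z" by (simp add: mat_diag_def)
  have "(mat_diag (dim_vec z) (($) (gate z)) *\<^sub>v z) $ i = (\<Sum>j<dim_vec z. (if i = j then gate z $ j else 0) * z $ j)"
    using i by (simp add: mat_diag_def scalar_prod_def atLeast0LessThan)
  also have "\<dots> = (\<Sum>j<dim_vec z. if j = i then gate z $ i * z $ i else 0)"
    by (rule sum.cong) auto
  also have "\<dots> = gate z $ i * z $ i"
    using i by simp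
  finally show "relu z $ i = (mat_diag (dim_vec z) (($) (gate z)) *\<^sub>v z) $ i"
    using i by (simp add: relu_def gate_def)
qed (simp add: relu_def mat_diag_def)

lemma affine_pat_pattern_carrier:
  assumes "wf_layers n ls" and "M \<in> carrier_mat n nx" and "dim_vec c = n"
  shows "fst (affine_pat ls (pattern ls v) (M, c)) \<in> carrier_mat (out_dim n ls) nx
    \<and> dim_vec (snd (affine_pat ls (pattern ls v) (M, c))) = out_dim n ls"
  using assms
proof (induction ls arbitrary: n M c v)
  case (Cons Wb ls)
  obtain W b where Wb: "Wb = (W, b)" by force
  define m where "m = dim_row W"
  define D where "D = mat_diag m (($) (gate (W *\<^sub>v v + b)))"
  have W: "W \<in> carrier_mat m n" and wf: "wf_layers m ls" and dz: "dim_vec (W *\<^sub>v v + b) = m"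
    using Cons.prems(1) by (auto simp: Wb m_def)
  have D: "D \<in> carrier_mat m m" by (simp add: D_def)
  then have "D * (W * M) \<in> carrier_mat m nx" "dim_vec (D *\<^sub>v (W *\<^sub>v c + b)) = m"
    using W Cons.prems(2) by auto
  note IH = Cons.IH[OF wf this, of "relu (W *\<^sub>v v + b)"]
  have "affine_pat (Wb # ls) (pattern (Wb # ls) v) (M, c) =
      affine_pat ls (pattern ls (relu (W *\<^sub>v v + b))) (D * (W * M), D *\<^sub>v (W *\<^sub>v c + b))"
    by (simp only: Wb pattern_Cons affine_pat_Cons dim_gate dz D_def)
  moreover have "out_dim n (Wb # ls) = out_dim m ls" by (simp add: Wb m_def)
  ultimately show ?case using IH by simp
qed simp

lemma relu_affine_layer:
  fixes W M :: "real mat" and b c x :: "real vec" and m :: nat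
  defines "z \<equiv> W *\<^sub>v (M *\<^sub>v x + c) + b"
  defines "D \<equiv> mat_diag m (($) (gate z))"
  assumes W: "W \<in> carrier_mat m n" and M: "M \<in> carrier_mat n nx"
    and b: "b \<in> carrier_vec m" and c: "c \<in> carrier_vec n" and x: "x \<in> carrier_vec nx"
  shows "relu z = (D * (W * M)) *\<^sub>v x + D *\<^sub>v (W *\<^sub>v c + b)"
proof -
  have dz: "dim_vec z = m" using b by (simp add: z_def)
  have D: "D \<in> carrier_mat m m" by (simp add: D_def)
  have WMx: "(W * M) *\<^sub>v x \<in> carrier_vec m" and Wcb: "W *\<^sub>v c + b \<in> carrier_vec m"
    using W M x c b by auto
  have "z = (W *\<^sub>v (M *\<^sub>v x) + W *\<^sub>v c) + b"
    unfolding z_def using mult_add_distrib_mat_vec[OF W _ c] M x by simp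
  also have "\<dots> = (W * M) *\<^sub>v x + (W *\<^sub>v c + b)"
    using assoc_mult_mat_vec[OF W M x] assoc_add_vec[OF WMx mult_mat_vec_carrier[OF W c] b] by simp
  finally have z_eq: "z = (W * M) *\<^sub>v x + (W *\<^sub>v c + b)" .
  have "relu z = D *\<^sub>v z"
    unfolding D_def dz[symmetric] by (rule relu_eq_mat_diag_gate)
  also have "\<dots> = D *\<^sub>v ((W * M) *\<^sub>v x) + D *\<^sub>v (W *\<^sub>v c + b)"
    unfolding z_eq by (rule mult_add_distrib_mat_vec[OF D WMx Wcb])
  also have "\<dots> = (D * (W * M)) *\<^sub>v x + D *\<^sub>v (W *\<^sub>v c + b)"
    using assoc_mult_mat_vec[OF D mult_carrier_mat[OF W M] x] by simp
  finally show ?thesis .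
qed

lemma hidden_eq_affine_pat_pattern:
  assumes "wf_layers n ls" and "M \<in> carrier_mat n nx" and "dim_vec c = n" and "x \<in> carrier_vec nx"
  shows "hidden ls (M *\<^sub>v x + c) =
    fst (affine_pat ls (pattern ls (M *\<^sub>v x + c)) (M, c)) *\<^sub>v x + snd (affine_pat ls (pattern ls (M *\<^sub>v x + c)) (M, c))"
  using assms
proof (induction ls arbitrary: n M c)
  case (Cons Wb ls)
  obtain W b where Wb: "Wb = (W, b)" by force
  define m where "m = dim_row W"
  define z where "z = W *\<^sub>v (M *\<^sub>v x + c) + b"
  define D where "D = mat_diag m (($) (gate z))"
  note M = Cons.prems(2) and x = Cons.prems(4)
  have W: "W \<in> carrier_mat m n" and db: "dim_vec b = m" and wf: "wf_layers m ls"
    using Cons.prems(1) by (auto simp: Wb m_def)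
  have relu_z: "relu z = (D * (W * M)) *\<^sub>v x + D *\<^sub>v (W *\<^sub>v c + b)"
    unfolding z_def D_def
    by (rule relu_affine_layer[OF W M carrier_vecI[OF db] carrier_vecI[OF Cons.prems(3)] x])
  have D: "D \<in> carrier_mat m m" by (simp add: D_def)
  then have "D * (W * M) \<in> carrier_mat m nx" "dim_vec (D *\<^sub>v (W *\<^sub>v c + b)) = m"
    using W M by auto
  note IH = Cons.IH[OF wf this x, folded relu_z]
  have dz: "dim_vec z = m" using db by (simp add: z_def)
  have "pattern (Wb # ls) (M *\<^sub>v x + c) = gate z # pattern ls (relu z)"
    by (simp only: Wb pattern_Cons z_def)
  moreover have "affine_pat (Wb # ls) (gate z # gs) (M, c) = affine_pat ls gs (D * (W * M), D *\<^sub>v (W *\<^sub>v c + b))" for gs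
    by (simp only: Wb affine_pat_Cons dim_gate dz D_def)
  moreover have "hidden (Wb # ls) (M *\<^sub>v x + c) = hidden ls (relu z)"
    by (simp only: Wb hidden.simps z_def)
  ultimately show ?case using IH by (simp only:)
qed simp

lemma W_pat_pattern_carrier:
  "wf_layers nx ls \<Longrightarrow> W_pat nx ls (pattern ls v) \<in> carrier_mat (out_dim nx ls) nx"
  using affine_pat_pattern_carrier[of nx ls "1\<^sub>m nx" nx "0\<^sub>v nx"] by (simp add: W_pat_def)

lemma b_pat_pattern_dim:
  "wf_layers nx ls \<Longrightarrow> dim_vec (b_pat nx ls (pattern ls v)) = out_dim nx ls"
  using affine_pat_pattern_carrier[of nx ls "1\<^sub>m nx" nx "0\<^sub>v nx"] by (simp add: b_pat_def)

lemma hidden_eq_pattern_affine: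
  assumes "wf_layers nx ls" and "x \<in> carrier_vec nx"
  shows "hidden ls x = W_pat nx ls (pattern ls x) *\<^sub>v x + b_pat nx ls (pattern ls x)"
  using hidden_eq_affine_pat_pattern[OF assms(1) one_carrier_mat _ assms(2), of "0\<^sub>v nx"] assms(2)
  by (simp add: W_pat_def b_pat_def)

lemma net_eq_pattern_affine:
  assumes "wf_net nx nu ls Wo bo" and "x \<in> carrier_vec nx"
  shows "net ls Wo bo x =
    (Wo * W_pat nx ls (pattern ls x)) *\<^sub>v x + (Wo *\<^sub>v b_pat nx ls (pattern ls x) + bo)"
proof -
  have wf: "wf_layers nx ls" and Wo: "Wo \<in> carrier_mat nu (out_dim nx ls)" and bo: "bo \<in> carrier_vec nu"
    using assms(1) by (auto simp: wf_net_def)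
  note Wp = W_pat_pattern_carrier[OF wf, of x] and bp = carrier_vecI[OF b_pat_pattern_dim[OF wf, of x]]
  have Wpx: "W_pat nx ls (pattern ls x) *\<^sub>v x \<in> carrier_vec (out_dim nx ls)"
    using Wp assms(2) by simp
  have "net ls Wo bo x = (Wo *\<^sub>v (W_pat nx ls (pattern ls x) *\<^sub>v x) + Wo *\<^sub>v b_pat nx ls (pattern ls x)) + bo"
    by (simp add: net_def hidden_eq_pattern_affine[OF wf assms(2)] mult_add_distrib_mat_vec[OF Wo Wpx bp])
  also have "\<dots> = (Wo * W_pat nx ls (pattern ls x)) *\<^sub>v x + (Wo *\<^sub>v b_pat nx ls (pattern ls x) + bo)"
    using assoc_add_vec[OF mult_mat_vec_carrier[OF Wo Wpx] mult_mat_vec_carrier[OF Wo bp] bo]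
      assoc_mult_mat_vec[OF Wo Wp assms(2)] by simp
  finally show ?thesis .
qed

lemma net_eq_linear_on_pattern_of_zero:
  assumes "wf_net nx nu ls Wo bo" and "x \<in> carrier_vec nx"
    and "pattern ls x = pattern ls (0\<^sub>v nx)"
    and "Wo *\<^sub>v b_pat nx ls (pattern ls (0\<^sub>v nx)) + bo = 0\<^sub>v nu"
  shows "net ls Wo bo x = (Wo * W_pat nx ls (pattern ls (0\<^sub>v nx))) *\<^sub>v x"
proof -
  have "Wo * W_pat nx ls (pattern ls x) \<in> carrier_mat nu nx"
    using assms(1) W_pat_pattern_carrier by (auto simp: wf_net_def)
  then show ?thesis
    using net_eq_pattern_affine[OF assms(1,2)] assms(2-4) by simp
qed

lemma funpow_eq_mat_pow_on_invariant:
  assumes M: "M \<in> carrier_mat n n"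
    and dim: "\<And>x. x \<in> S \<Longrightarrow> x \<in> carrier_vec n"
    and inv: "\<And>x. x \<in> S \<Longrightarrow> f x \<in> S"
    and lin: "\<And>x. x \<in> S \<Longrightarrow> f x = M *\<^sub>v x"
    and "x \<in> S"
  shows "(f ^^ j) x = (M ^\<^sub>m j) *\<^sub>v x"
  using \<open>x \<in> S\<close>
proof (induction j arbitrary: x)
  case 0
  then show ?case using dim M by auto
next
  case (Suc j)
  have "(f ^^ Suc j) x = (M ^\<^sub>m j) *\<^sub>v (M *\<^sub>v x)"
    using Suc.IH[OF inv[OF Suc.prems]] lin[OF Suc.prems] by (simp add: funpow_Suc_right del: funpow.simps)
  also have "\<dots> = (M ^\<^sub>m Suc j) *\<^sub>v x"
    using assoc_mult_mat_vec[OF pow_carrier_mat[OF M] M dim[OF Suc.prems]] by simp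
  finally show ?case .
qed

lemma conv_zero_funpow_shift:
  assumes "conv_zero n (\<lambda>j. (f ^^ j) ((f ^^ k) x))"
  shows "conv_zero n (\<lambda>j. (f ^^ j) x)"
  unfolding conv_zero_def
proof (intro allI impI)
  fix i assume "i < n"
  then have "(\<lambda>j. (f ^^ (j + k)) x $ i) \<longlonglongrightarrow> 0"
    using assms by (simp add: conv_zero_def funpow_add)
  then show "(\<lambda>j. (f ^^ j) x $ i) \<longlonglongrightarrow> 0" by (rule LIMSEQ_offset)
qed

lemma conv_zero_of_funpow_mem_linear_invariant:
  assumes M: "M \<in> carrier_mat n n"
    and dim: "\<And>x. x \<in> S \<Longrightarrow> x \<in> carrier_vec n"
    and inv: "\<And>x. x \<in> S \<Longrightarrow> f x \<in> S"
    and lin: "\<And>x. x \<in> S \<Longrightarrow> f x = M *\<^sub>v x"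
    and conv: "\<And>x. x \<in> S \<Longrightarrow> conv_zero n (\<lambda>j. (M ^\<^sub>m j) *\<^sub>v x)"
    and "(f ^^ k) x \<in> S"
  shows "conv_zero n (\<lambda>j. (f ^^ j) x)"
proof (rule conv_zero_funpow_shift)
  show "conv_zero n (\<lambda>j. (f ^^ j) ((f ^^ k) x))"
    using conv[OF \<open>(f ^^ k) x \<in> S\<close>]
      funpow_eq_mat_pow_on_invariant[OF M dim inv lin \<open>(f ^^ k) x \<in> S\<close>] by simp
qed

lemma polyh_memI:
  assumes "C \<in> carrier_mat m n" and "dim_vec c = m" and "x \<in> carrier_vec n"
    and "\<And>i. i < m \<Longrightarrow> row C i \<bullet> x \<le> c $ i"
  shows "x \<in> polyh n C c"
  using assms by (auto simp: polyh_def vle_def)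

theorem theorem1:
  fixes nx nu mx mu nin nout k :: nat
    and A B Cx Cu Cin Cout Wo :: "real mat"
    and cx cu cin cstar bo :: "real vec"
    and ls :: "(real mat \<times> real vec) list"
    and Ras X U Req RK Xin Xout :: "real vec set"
    and N fcl :: "real vec \<Rightarrow> real vec"
    and Geq :: "real vec list" and K :: "real mat"
  assumes X_def: "X = polyh nx Cx cx"
      and U_def: "U =  polyh nu Cu cu"
      and N_def: "N =  net ls Wo bo"
      and fcl_def: "fcl =  (\<lambda>x. A *\<^sub>v x + B *\<^sub>v N x)"
      and Geq_def: "Geq =  pattern ls (0\<^sub>v nx)"
      and Req_def: "Req =  {x. dim_vec x = nx \<and> pattern ls x = Geq}"
      and K_def: "K =  Wo * W_pat nx ls Geq"
      and RK_def: "RK =  {x0. dim_vec x0 = nx \<and>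
                 (\<forall>j. ((A + B * K) ^\<^sub>m j) *\<^sub>v x0 \<in> X \<and> K *\<^sub>v (((A + B * K) ^\<^sub>m j) *\<^sub>v x0) \<in> U) \<and>
                 conv_zero nx (\<lambda>j. ((A + B * K) ^\<^sub>m j) *\<^sub>v x0)}"
      and Xin_def: "Xin =  polyh nx Cin cin"
      and Xout_def: "Xout =  polyh nx Cout cstar"
      and A_dim: "A \<in> carrier_mat nx nx" and B_dim: "B \<in> carrier_mat nx nu"
      and Cx_dim: "Cx \<in> carrier_mat mx nx" and cx_dim: "dim_vec cx = mx"
      and Cu_dim: "Cu \<in> carrier_mat mu nu" and cu_dim: "dim_vec cu = mu"
      and X_int: "zero_interior nx X" and U_int: "zero_interior nu U"
      and net_wf: "wf_net nx nu ls Wo bo"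
      and equil: "fcl (0\<^sub>v nx) = 0\<^sub>v nx"
      and b_eq: "Wo *\<^sub>v b_pat nx ls Geq + bo = 0\<^sub>v nu"
      and stable: "\<And>ev. eigenvalue (map_mat complex_of_real (A + B * K)) ev \<Longrightarrow> cmod ev < 1"
      and Ras_dim: "\<And>x. x \<in> Ras \<Longrightarrow> dim_vec x = nx"
      and Ras_adm: "\<And>x. x \<in> Ras \<Longrightarrow> N x \<in> U"
      and Ras_inv: "\<And>x. x \<in> Ras \<Longrightarrow> fcl x \<in> Ras"
      and Ras_sub: "Ras \<subseteq> Req \<inter> RK"
      and Cin_dim: "Cin \<in> carrier_mat nin nx" and cin_dim: "dim_vec cin = nin"
      and Xin_bdd: "bounded_vecs Xin"
      and k_pos: "k \<ge> 1"
      and Cout_dim: "Cout \<in> carrier_mat nout nx" and cstar_dim: "dim_vec cstar = nout"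
      and cstar_max: "\<And>i. i < nout \<Longrightarrow>
            (\<exists>x0\<in>Xin. row Cout i \<bullet> (fcl ^^ k) x0 = cstar $ i) \<and>
            (\<forall>x0\<in>Xin. row Cout i \<bullet> (fcl ^^ k) x0 \<le> cstar $ i)"
      and out_sub: "Xout \<subseteq> Ras"
  shows "\<forall>x0\<in>Xin. conv_zero nx (\<lambda>j. (fcl ^^ j) x0)"
proof
  fix x0 assume x0: "x0 \<in> Xin"
  have wf: "wf_layers nx ls" and Wo: "Wo \<in> carrier_mat nu (out_dim nx ls)"
    using net_wf by (auto simp: wf_net_def)
  then have K: "K \<in> carrier_mat nu nx"
    using W_pat_pattern_carrier[OF wf] by (auto simp: K_def Geq_def)
  have Ras_vec: "x \<in> carrier_vec nx" if "x \<in> Ras" for x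
    using Ras_dim[OF that] by (rule carrier_vecI)
  have fcl_linear: "fcl x = (A + B * K) *\<^sub>v x" if "x \<in> Ras" for x
  proof -
    have "pattern ls x = pattern ls (0\<^sub>v nx)" using that Ras_sub by (auto simp: Req_def Geq_def)
    then have "N x = K *\<^sub>v x"
      using net_eq_linear_on_pattern_of_zero[OF net_wf Ras_vec[OF that]] b_eq
      by (simp add: N_def K_def Geq_def)
    then show ?thesis
      using A_dim B_dim K Ras_vec[OF that] by (simp add: fcl_def add_mult_distrib_mat_vec assoc_mult_mat_vec)
  qed
  have fcl_dim: "dim_vec (fcl x) = nx" for x
    using B_dim by (simp add: fcl_def)
  obtain k' where "k = Suc k'" using k_pos by (cases k) auto
  then have "(fcl ^^ k) x0 \<in> carrier_vec nx"
    using carrier_vecI[OF fcl_dim] by simp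
  moreover have "row Cout i \<bullet> (fcl ^^ k) x0 \<le> cstar $ i" if "i < nout" for i
    using cstar_max[OF that] x0 by blast
  ultimately have "(fcl ^^ k) x0 \<in> Xout"
    unfolding Xout_def by (rule polyh_memI[OF Cout_dim cstar_dim])
  moreover have "A + B * K \<in> carrier_mat nx nx" using A_dim B_dim K by auto
  ultimately show "conv_zero nx (\<lambda>j. (fcl ^^ j) x0)"
    using Ras_vec Ras_inv fcl_linear Ras_sub out_sub
    by (intro conv_zero_of_funpow_mem_linear_invariant[where S = Ras and k = k]) (auto simp: RK_def)
qed

end
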